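(* Let $(A,d)$ and $(A',d')$ be unital dg-algebras over $\mathbb{R}$, let $l\ge 2$, and let $f_i\in \mathrm{Hom}^0(A[1]^{\otimes i},A'[1])$, $i=1,\dots,l-1$, be linear maps such that $f_1$ is unital, i.e. $f_1(1)=1$, and $f_2,\dots,f_{l-1}$ are normal. Define the multilinear map $\Psi_l[f_1,\dots,f_{l-1}]: A[1]^{\otimes l}\to A'[1]$ by $$\Psi_l[f_1,\ldots,f_{l-1}](a_1,\ldots,a_l)=\sum_{i=1}^{l-1}(-1)^{\bar a_1+\cdots+\bar a_i}f_{l-1}(a_1,\ldots,a_ia_{i+1},\ldots,a_l)-\sum_{i=1}^{l-1}(-1)^{\bar a_1+\cdots+\bar a_i}f_i(a_1,\ldots,a_i)\,f_{l-i}(a_{i+1},\ldots,a_l)$$ for homogeneous $a_1,\dots,a_l$, where products are taken in $A$ resp. $A'$. Then $\Psi_l[f_1,\dots,f_{l-1}]$ is normal.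
   Context: For a graded vector space $A=\bigoplus A_n$, the shifted space $A[1]$ has $A[1]_n=A_{n+1}$; for homogeneous $a$ one writes $\bar a=\deg a-1$ for its degree in $A[1]$, where $\deg a$ is its degree in $A$. $\mathrm{Hom}^0$ denotes degree-preserving linear maps. A multilinear map $f: A[1]^{\otimes l}\to A'[1]$ is called normal if $f(a_1,\dots,a_l)=0$ whenever some argument $a_i$ equals the unit $1\in A$. *)

theory Defs
  imports Complex_Main
begin

definition graded_vs :: "(int \<Rightarrow> 'a::real_vector set) \<Rightarrow> bool" where
  "graded_vs G \<longleftrightarrow> (\<forall>n. subspace (G n)) \<and>
     (\<forall>x. \<exists>!c. finite {n. c n \<noteq> 0} \<and> (\<forall>n. c n \<in> G n) \<and> x = (\<Sum>n\<in>{n. c n \<noteq> 0}. c n))"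

definition unital_dg_algebra :: "(int \<Rightarrow> 'a::real_algebra_1 set) \<Rightarrow> ('a \<Rightarrow> 'a) \<Rightarrow> bool" where
  "unital_dg_algebra G d \<longleftrightarrow> graded_vs G \<and> 1 \<in> G 0 \<and>
     (\<forall>m n x y. x \<in> G m \<longrightarrow> y \<in> G n \<longrightarrow> x * y \<in> G (m + n)) \<and>
     linear d \<and> (\<forall>n x. x \<in> G n \<longrightarrow> d x \<in> G (n + 1)) \<and> (\<forall>x. d (d x) = 0) \<and>
     (\<forall>n x y. x \<in> G n \<longrightarrow> d (x * y) = d x * y + (if even n then 1 else -1) *\<^sub>R (x * d y))"

definition multilinear :: "nat \<Rightarrow> ('a::real_vector list \<Rightarrow> 'b::real_vector) \<Rightarrow> bool" where
  "multilinear i f \<longleftrightarrow> (\<forall>as k. length as = i \<longrightarrow> k < i \<longrightarrow> linear (\<lambda>x. f (as[k := x])))"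

text \<open>Elements of Hom^0(A[1]^{\<otimes>i}, A'[1]): multilinear and of degree 0 for the shifted
  grading (an element of A_n has degree n - 1 in A[1]).\<close>
definition hom0_shift :: "(int \<Rightarrow> 'a::real_vector set) \<Rightarrow> (int \<Rightarrow> 'b::real_vector set) \<Rightarrow> nat
    \<Rightarrow> ('a list \<Rightarrow> 'b) \<Rightarrow> bool" where
  "hom0_shift G G' i f \<longleftrightarrow> multilinear i f \<and>
     (\<forall>as ns. length as = i \<longrightarrow> length ns = i \<longrightarrow> (\<forall>k<i. as ! k \<in> G (ns ! k)) \<longrightarrow>
        f as \<in> G' (sum_list (map (\<lambda>n. n - 1) ns) + 1))"

definition normal_map :: "nat \<Rightarrow> ('a::real_algebra_1 list \<Rightarrow> 'b::zero) \<Rightarrow> bool" where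
  "normal_map i f \<longleftrightarrow> (\<forall>as. length as = i \<longrightarrow> 1 \<in> set as \<longrightarrow> f as = 0)"

definition sgn_pow :: "int \<Rightarrow> real" where
  "sgn_pow k = (if even k then 1 else -1)"

text \<open>Psi_l[f_1,...,f_{l-1}] evaluated on homogeneous arguments as (0-indexed list of
  length l) with as ! k \<in> A_(ns ! k); the shifted degree is ns ! k - 1.\<close>
definition Psi :: "(nat \<Rightarrow> 'a::real_algebra_1 list \<Rightarrow> 'b::real_algebra_1) \<Rightarrow> nat \<Rightarrow> int list \<Rightarrow> 'a list \<Rightarrow> 'b" where
  "Psi f l ns as =
     (\<Sum>i=1..l-1. sgn_pow (\<Sum>k<i. ns ! k - 1) *\<^sub>R
         f (l - 1) (take (i - 1) as @ [as ! (i - 1) * as ! i] @ drop (i + 1) as))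
   - (\<Sum>i=1..l-1. sgn_pow (\<Sum>k<i. ns ! k - 1) *\<^sub>R (f i (take i as) * f (l - i) (drop i as)))"

end

theory Submission
  imports Defs
begin

(* The grading of A is a direct sum decomposition, so the unit lies in A_0 only and has
   degree -1 in A[1]. If the unit is an inner argument a_p, the two contraction terms
   a_(p-1) * 1 and 1 * a_(p+1) coincide but carry opposite signs, and every other term of
   Psi contains a unit argument of a normal map. If the unit is the first or last argument,
   only one contraction and one splitting term survive, and they agree because f_1(1) = 1. *)

lemma graded_vs_degree_unique:
  assumes "graded_vs G" and "x \<noteq> 0" and "x \<in> G m" and "x \<in> G n"
  shows "m = n"
proof (rule ccontr)
  assume "m \<noteq> n"
  have zero: "0 \<in> G k" for k
    using assms(1) subspace_0 unfolding graded_vs_def by blast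
  have unique: "\<exists>!c. finite {k. c k \<noteq> 0} \<and> (\<forall>k. c k \<in> G k) \<and> x = (\<Sum>k\<in>{k. c k \<noteq> 0}. c k)"
    using assms(1) unfolding graded_vs_def by blast
  have concentrated: "finite {k. c k \<noteq> 0} \<and> (\<forall>k. c k \<in> G k) \<and> x = (\<Sum>k\<in>{k. c k \<noteq> 0}. c k)"
    if "c = (\<lambda>k. if k = j then x else 0)" and "x \<in> G j" for c j
  proof -
    have "{k. c k \<noteq> 0} = {j}" using that assms(2) by auto
    then show ?thesis using that zero by auto
  qed
  define c where "c = (\<lambda>k. if k = m then x else 0)"
  define c' where "c' = (\<lambda>k. if k = n then x else 0)"
  have "c = c'"
    using unique concentrated[OF c_def assms(3)] concentrated[OF c'_def assms(4)] by blast
  then have "c m = c' m" by simp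
  then show False
    using \<open>m \<noteq> n\<close> assms(2) by (simp add: c_def c'_def)
qed

lemma unital_dg_algebra_one_degree:
  assumes "unital_dg_algebra G d" and "1 \<in> G n"
  shows "n = 0"
  using assms graded_vs_degree_unique[of G 1 n 0] unfolding unital_dg_algebra_def by auto

definition merge_adjacent :: "nat \<Rightarrow> 'a::times list \<Rightarrow> 'a list" where
  "merge_adjacent k as = take k as @ [as ! k * as ! Suc k] @ drop (Suc (Suc k)) as"

lemma length_merge_adjacent:
  "Suc k < length as \<Longrightarrow> length (merge_adjacent k as) = length as - 1"
  unfolding merge_adjacent_def by simp

lemma merge_adjacent_one_left:
  fixes as :: "'a::monoid_mult list"
  assumes "as ! k = 1" and "Suc k < length as"
  shows "merge_adjacent k as = take k as @ drop (Suc k) as"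
  using assms unfolding merge_adjacent_def by (simp add: Cons_nth_drop_Suc)

lemma merge_adjacent_one_right:
  fixes as :: "'a::monoid_mult list"
  assumes "as ! Suc k = 1" and "Suc k < length as"
  shows "merge_adjacent k as = take (Suc k) as @ drop (Suc (Suc k)) as"
  using assms unfolding merge_adjacent_def by (simp add: take_Suc_conv_app_nth)

lemma nth_mem_take: "j < i \<Longrightarrow> j < length xs \<Longrightarrow> xs ! j \<in> set (take i xs)"
  using nth_mem[of j "take i xs"] by simp

lemma nth_mem_drop: "i \<le> j \<Longrightarrow> j < length xs \<Longrightarrow> xs ! j \<in> set (drop i xs)"
  using nth_mem[of "j - i" "drop i xs"] by simp

lemma nth_mem_merge_adjacent:
  assumes "j \<noteq> k" and "j \<noteq> Suc k" and "j < length as"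
  shows "as ! j \<in> set (merge_adjacent k as)"
proof (cases "j < k")
  case True
  then show ?thesis unfolding merge_adjacent_def using assms by (simp add: nth_mem_take)
next
  case False
  then show ?thesis unfolding merge_adjacent_def using assms by (simp add: nth_mem_drop)
qed

definition koszul_sign :: "int list \<Rightarrow> nat \<Rightarrow> real" where
  "koszul_sign ns i = sgn_pow (\<Sum>k<i. ns ! k - 1)"

lemma koszul_sign_Suc_degree_0:
  "ns ! p = 0 \<Longrightarrow> koszul_sign ns (Suc p) = - koszul_sign ns p"
  unfolding koszul_sign_def sgn_pow_def by auto

lemma Psi_eq_merge_adjacent:
  "Psi f l ns as =
     (\<Sum>i=1..l-1. koszul_sign ns i *\<^sub>R f (l - 1) (merge_adjacent (i - 1) as))
   - (\<Sum>i=1..l-1. koszul_sign ns i *\<^sub>R (f i (take i as) * f (l - i) (drop i as)))"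
  unfolding Psi_def koszul_sign_def merge_adjacent_def
  by (intro arg_cong2[where f = minus] sum.cong) (auto simp: Suc_diff_le)

context
  fixes f :: "nat \<Rightarrow> 'a::real_algebra_1 list \<Rightarrow> 'b::real_algebra_1" and l :: nat
    and as :: "'a list" and p :: nat
  assumes normal: "\<forall>i\<in>{2..l-1}. normal_map i (f i)"
    and length_as: "length as = l" and unit_pos: "p < l" and unit: "as ! p = 1"
begin

lemma merge_term_eq_0:
  assumes "i \<in> {1..l-1}" and "i \<noteq> p" and "i \<noteq> Suc p"
  shows "f (l - 1) (merge_adjacent (i - 1) as) = 0"
proof -
  have "1 \<in> set (merge_adjacent (i - 1) as)"
    using nth_mem_merge_adjacent[of p "i - 1" as] assms unit unit_pos length_as by auto
  moreover have "l - 1 \<in> {2..l-1}" using assms unit_pos by auto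
  ultimately show ?thesis
    using normal assms length_as length_merge_adjacent[of "i - 1" as]
    unfolding normal_map_def by auto
qed

lemma split_term_eq_0:
  assumes "i \<in> {1..l-1}" and "\<not> (i = 1 \<and> p = 0)" and "\<not> (i = l - 1 \<and> p = l - 1)"
  shows "f i (take i as) * f (l - i) (drop i as) = 0"
proof (cases "p < i")
  case True
  then have "1 \<in> set (take i as)" and "i \<in> {2..l-1}"
    using nth_mem_take[of p i as] assms unit unit_pos length_as by auto
  then have "f i (take i as) = 0"
    using normal length_as assms unfolding normal_map_def by auto
  then show ?thesis by simp
next
  case False
  then have "1 \<in> set (drop i as)" and "l - i \<in> {2..l-1}"
    using nth_mem_drop[of i p as] assms unit unit_pos length_as by auto
  then have "f (l - i) (drop i as) = 0"
    using normal length_as assms unfolding normal_map_def by auto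
  then show ?thesis by simp
qed

lemma Psi_unit_first:
  assumes "p = 0" and "2 \<le> l" and "f 1 [1] = 1"
  shows "Psi f l ns as = 0"
proof -
  have take_1: "take 1 as = [1]" and merge_0: "merge_adjacent 0 as = drop 1 as"
    using assms unit length_as merge_adjacent_one_left[of as 0]
    by (auto simp: take_Suc_conv_app_nth)
  have "(\<Sum>i=1..l-1. koszul_sign ns i *\<^sub>R f (l - 1) (merge_adjacent (i - 1) as))
      = koszul_sign ns 1 *\<^sub>R f (l - 1) (drop 1 as)"
    using merge_term_eq_0 assms merge_0
    by (subst sum.mono_neutral_right[where S = "{1}"]) auto
  moreover have "(\<Sum>i=1..l-1. koszul_sign ns i *\<^sub>R (f i (take i as) * f (l - i) (drop i as)))
      = koszul_sign ns 1 *\<^sub>R f (l - 1) (drop 1 as)"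
    using split_term_eq_0 assms take_1
    by (subst sum.mono_neutral_right[where S = "{1}"]) auto
  ultimately show ?thesis
    by (simp add: Psi_eq_merge_adjacent)
qed

lemma Psi_unit_last:
  assumes "p = l - 1" and "2 \<le> l" and "f 1 [1] = 1"
  shows "Psi f l ns as = 0"
proof -
  have drop_last: "drop (l - 1) as = [1]"
    using assms unit length_as Cons_nth_drop_Suc[of "l - 1" as] by simp
  have merge_last: "merge_adjacent (l - 2) as = take (l - 1) as"
    using assms unit length_as merge_adjacent_one_right[of as "l - 2"]
    by (simp add: Suc_diff_Suc numeral_2_eq_2)
  have "(\<Sum>i=1..l-1. koszul_sign ns i *\<^sub>R f (l - 1) (merge_adjacent (i - 1) as))
      = koszul_sign ns (l - 1) *\<^sub>R f (l - 1) (take (l - 1) as)"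
    using merge_term_eq_0 assms merge_last
    by (subst sum.mono_neutral_right[where S = "{l - 1}"]) (auto simp: numeral_2_eq_2)
  moreover have "(\<Sum>i=1..l-1. koszul_sign ns i *\<^sub>R (f i (take i as) * f (l - i) (drop i as)))
      = koszul_sign ns (l - 1) *\<^sub>R f (l - 1) (take (l - 1) as)"
    using split_term_eq_0 assms drop_last
    by (subst sum.mono_neutral_right[where S = "{l - 1}"]) auto
  ultimately show ?thesis
    by (simp add: Psi_eq_merge_adjacent)
qed

lemma Psi_unit_inner:
  assumes "0 < p" and "p < l - 1" and "ns ! p = 0"
  shows "Psi f l ns as = 0"
proof -
  have merges_agree: "merge_adjacent (p - 1) as = merge_adjacent p as"
    using assms unit length_as merge_adjacent_one_left[of as p] merge_adjacent_one_right[of as "p - 1"]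
    by simp
  have "(\<Sum>i=1..l-1. koszul_sign ns i *\<^sub>R f (l - 1) (merge_adjacent (i - 1) as))
      = (\<Sum>i\<in>{p, Suc p}. koszul_sign ns i *\<^sub>R f (l - 1) (merge_adjacent (i - 1) as))"
    using merge_term_eq_0 assms by (intro sum.mono_neutral_right) auto
  also have "\<dots> = 0"
    using merges_agree koszul_sign_Suc_degree_0[OF assms(3)] by simp
  finally show ?thesis
    using split_term_eq_0 assms by (simp add: Psi_eq_merge_adjacent)
qed

end

theorem proposition2:
  fixes G :: "int \<Rightarrow> 'a::real_algebra_1 set" and d :: "'a \<Rightarrow> 'a"
    and G' :: "int \<Rightarrow> 'b::real_algebra_1 set" and d' :: "'b \<Rightarrow> 'b"
    and f :: "nat \<Rightarrow> 'a list \<Rightarrow> 'b" and l :: nat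
  assumes "unital_dg_algebra G d" and "unital_dg_algebra G' d'"
    and "l \<ge> 2"
    and "\<forall>i\<in>{1..l-1}. hom0_shift G G' i (f i)"
    and "f 1 [1] = 1"
    and "\<forall>i\<in>{2..l-1}. normal_map i (f i)"
  shows "\<forall>as ns. length as = l \<longrightarrow> length ns = l \<longrightarrow> (\<forall>k<l. as ! k \<in> G (ns ! k)) \<longrightarrow>
           1 \<in> set as \<longrightarrow> Psi f l ns as = 0"
proof (intro allI impI)
  fix as :: "'a list" and ns :: "int list"
  assume length_as: "length as = l" and homogeneous: "\<forall>k<l. as ! k \<in> G (ns ! k)"
    and "1 \<in> set as"
  then obtain p where p: "p < l" and unit: "as ! p = 1"
    by (metis in_set_conv_nth)
  have "ns ! p = 0"
    using unital_dg_algebra_one_degree[OF assms(1)] homogeneous p unit by metis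
  note Psi_unit = Psi_unit_first Psi_unit_last Psi_unit_inner
  consider "p = 0" | "p = l - 1" | "0 < p \<and> p < l - 1"
    using p by linarith
  then show "Psi f l ns as = 0"
    using Psi_unit[OF assms(6) length_as p unit] assms(3,5) \<open>ns ! p = 0\<close> by cases auto
qed

end
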